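(* Suppose $L>L_f$ and let $(u_k)$ be generated by the IHT method with parameter $L$. Then: (1) if $\alpha>0$ or $b<+\infty$, the sequences $(u_k)$ and $(\nabla f(u_k))$ are bounded in $L^2(\Omega)$; (2) the sequence $(f(u_k)+g(u_k))$ is monotonically decreasing and convergent; (3) $\|u_{k+1}-u_k\|_{L^2(\Omega)}\to0$; (4) $\sum_{k=1}^\infty\|\chi_k-\chi_{k+1}\|_{L^1(\Omega)}<+\infty$; (5) there is a characteristic function $\chi$ of a measurable subset of $\Omega$ with $\chi_k\to\chi$ in $L^1(\Omega)$.
   Context: Let $\Omega\subset\mathbb R^n$ be a bounded open set with Lebesgue measure. Fix $\alpha\ge0$, $\beta>0$, $b\in(0,+\infty]$ and set $U_{ad}:=\{v\in L^2(\Omega): |v(x)|\le b\text{ a.e. in }\Omega\}$. For $t\in\mathbb R$ let $|t|_0:=0$ if $t=0$ and $|t|_0:=1$ if $t\ne0$; for measurable $u$ let $\|u\|_0:=\operatorname{meas}\{x\in\Omega:u(x)\ne0\}$. Define $g(u):=\frac\alpha2\|u\|_{L^2(\Omega)}^2+\beta\|u\|_0$. The function $f:L^2(\Omega)\to\mathbb R$ is weakly lower semicontinuous, bounded from below and Fréchet differentiable; $\nabla f(u)\in L^2(\Omega)$ is the Riesz representative of its derivative, and $\nabla f$ is Lipschitz continuous on $L^2(\Omega)$ with constant $L_f$. IHT method: given $L>0$ and $u_0\in U_{ad}$, for $k=0,1,\dots$ let $u_{k+1}$ be a global solution of $\min_{u\in U_{ad}} f(u_k)+\int_\Omega\nabla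 f(u_k)(u-u_k)\,dx+\frac L2\|u-u_k\|_{L^2(\Omega)}^2+g(u)$ (a solution exists). Let $\chi_k$ denote the characteristic function of $\{x\in\Omega:u_k(x)\ne0\}$. *)

theory Defs
  imports "HOL-Analysis.Analysis"
begin

text \<open>Elements of L2(Omega) are represented by Lebesgue-measurable, square-integrable
real functions on Omega (representatives of the a.e. classes).\<close>

definition L2 :: "'a::euclidean_space set \<Rightarrow> ('a \<Rightarrow> real) set" where
  "L2 \<Omega> = {u. u \<in> borel_measurable (lebesgue_on \<Omega>) \<and>
                  integrable (lebesgue_on \<Omega>) (\<lambda>x. (u x)\<^sup>2)}"

definition l2_inner :: "'a::euclidean_space set \<Rightarrow> ('a \<Rightarrow> real) \<Rightarrow> ('a \<Rightarrow> real) \<Rightarrow> real" where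
  "l2_inner \<Omega> u v = (\<integral>x. u x * v x \<partial>lebesgue_on \<Omega>)"

definition l2_norm :: "'a::euclidean_space set \<Rightarrow> ('a \<Rightarrow> real) \<Rightarrow> real" where
  "l2_norm \<Omega> u = sqrt (\<integral>x. (u x)\<^sup>2 \<partial>lebesgue_on \<Omega>)"

definition l1_norm :: "'a::euclidean_space set \<Rightarrow> ('a \<Rightarrow> real) \<Rightarrow> real" where
  "l1_norm \<Omega> u = (\<integral>x. \<bar>u x\<bar> \<partial>lebesgue_on \<Omega>)"

definition l0_norm :: "'a::euclidean_space set \<Rightarrow> ('a \<Rightarrow> real) \<Rightarrow> real" where
  "l0_norm \<Omega> u = measure (lebesgue_on \<Omega>) {x \<in> \<Omega>. u x \<noteq> 0}"

definition gfun :: "real \<Rightarrow> real \<Rightarrow> 'a::euclidean_space set \<Rightarrow> ('a \<Rightarrow> real) \<Rightarrow> real" where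
  "gfun \<alpha> \<beta> \<Omega> u = \<alpha> / 2 * (l2_norm \<Omega> u)\<^sup>2 + \<beta> * l0_norm \<Omega> u"

text \<open>Admissible set; b :: ereal allows b = +infinity.\<close>
definition Uad :: "'a::euclidean_space set \<Rightarrow> ereal \<Rightarrow> ('a \<Rightarrow> real) set" where
  "Uad \<Omega> b = {v \<in> L2 \<Omega>. AE x in lebesgue_on \<Omega>. ereal \<bar>v x\<bar> \<le> b}"

definition chi :: "('a \<Rightarrow> real) \<Rightarrow> ('a \<Rightarrow> real)" where
  "chi u = indicator {x. u x \<noteq> 0}"

definition weakly_converges ::
  "'a::euclidean_space set \<Rightarrow> (nat \<Rightarrow> 'a \<Rightarrow> real) \<Rightarrow> ('a \<Rightarrow> real) \<Rightarrow> bool" where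
  "weakly_converges \<Omega> U u \<longleftrightarrow>
     (\<forall>w \<in> L2 \<Omega>. (\<lambda>k. l2_inner \<Omega> (U k) w) \<longlonglongrightarrow> l2_inner \<Omega> u w)"

definition weakly_lsc :: "'a::euclidean_space set \<Rightarrow> (('a \<Rightarrow> real) \<Rightarrow> real) \<Rightarrow> bool" where
  "weakly_lsc \<Omega> f \<longleftrightarrow>
     (\<forall>U u. (\<forall>k. U k \<in> L2 \<Omega>) \<longrightarrow> u \<in> L2 \<Omega> \<longrightarrow> weakly_converges \<Omega> U u \<longrightarrow>
        ereal (f u) \<le> liminf (\<lambda>k. ereal (f (U k))))"

definition frechet_gradient ::
  "'a::euclidean_space set \<Rightarrow> (('a \<Rightarrow> real) \<Rightarrow> real) \<Rightarrow> (('a \<Rightarrow> real) \<Rightarrow> ('a \<Rightarrow> real)) \<Rightarrow> bool" where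
  "frechet_gradient \<Omega> f G \<longleftrightarrow>
     (\<forall>u \<in> L2 \<Omega>. G u \<in> L2 \<Omega> \<and>
        (\<forall>e>0. \<exists>d>0. \<forall>v \<in> L2 \<Omega>. l2_norm \<Omega> (\<lambda>x. v x - u x) < d \<longrightarrow>
           \<bar>f v - f u - l2_inner \<Omega> (G u) (\<lambda>x. v x - u x)\<bar> \<le> e * l2_norm \<Omega> (\<lambda>x. v x - u x)))"

definition iht_model ::
  "real \<Rightarrow> real \<Rightarrow> 'a::euclidean_space set \<Rightarrow> (('a \<Rightarrow> real) \<Rightarrow> real) \<Rightarrow> (('a \<Rightarrow> real) \<Rightarrow> ('a \<Rightarrow> real))
    \<Rightarrow> real \<Rightarrow> ('a \<Rightarrow> real) \<Rightarrow> ('a \<Rightarrow> real) \<Rightarrow> real" where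
  "iht_model \<alpha> \<beta> \<Omega> f G L uk u =
     f uk + l2_inner \<Omega> (G uk) (\<lambda>x. u x - uk x) + L / 2 * (l2_norm \<Omega> (\<lambda>x. u x - uk x))\<^sup>2
     + gfun \<alpha> \<beta> \<Omega> u"

end

theory Submission
  imports Defs
begin

(* The IHT step minimises f(u_k) + <grad f(u_k), u - u_k> + L/2 ||u - u_k||^2 + g(u), a majorant of f + g
   by the descent lemma, so f + g decreases along the iterates by at least (L - L_f)/2 ||u_{k+1} - u_k||^2.
   Being bounded below, it converges, and the squared steps are summable.
   The model is the integral of a scalar function of u(x) and U_ad is closed under pointwise choice, so
   u_{k+1}(x) minimises that scalar function a.e.; comparing it with 0 and with 2 u_{k+1}(x) shows that the
   nonzero values of u_{k+1} stay away from 0 by a fixed margin. Hence a point where the support changes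
   contributes a fixed amount to ||u_{k+2} - u_{k+1}||^2: the symmetric differences of consecutive supports
   have summable measure, and the supports converge in measure to their lim inf. *)

section \<open>Square-integrable functions\<close>

lemma L2_borel_measurable: "u \<in> L2 \<Omega> \<Longrightarrow> u \<in> borel_measurable (lebesgue_on \<Omega>)"
  by (simp add: L2_def)

lemma L2_integrable_power2: "u \<in> L2 \<Omega> \<Longrightarrow> integrable (lebesgue_on \<Omega>) (\<lambda>x. (u x)\<^sup>2)"
  by (simp add: L2_def)

lemma L2_if_power2_le:
  assumes "integrable (lebesgue_on \<Omega>) g" "z \<in> borel_measurable (lebesgue_on \<Omega>)"
    and "AE x in lebesgue_on \<Omega>. (z x)\<^sup>2 \<le> g x"
  shows "z \<in> L2 \<Omega>"
  unfolding L2_def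
proof (intro CollectI conjI assms(2))
  show "integrable (lebesgue_on \<Omega>) (\<lambda>x. (z x)\<^sup>2)"
  proof (rule Bochner_Integration.integrable_bound[OF assms(1)])
    show "AE x in lebesgue_on \<Omega>. norm ((z x)\<^sup>2) \<le> norm (g x)"
      using assms(3) by eventually_elim simp
  qed (use assms(2) in measurable)
qed

lemma L2_zero: "(\<lambda>x. 0) \<in> L2 \<Omega>"
  by (simp add: L2_def)

lemma integrable_L2_mult:
  assumes "u \<in> L2 \<Omega>" "v \<in> L2 \<Omega>"
  shows "integrable (lebesgue_on \<Omega>) (\<lambda>x. u x * v x)"
proof (rule Bochner_Integration.integrable_bound)
  show "integrable (lebesgue_on \<Omega>) (\<lambda>x. (u x)\<^sup>2 + (v x)\<^sup>2)"
    using assms by (simp add: L2_integrable_power2)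
  show "(\<lambda>x. u x * v x) \<in> borel_measurable (lebesgue_on \<Omega>)"
    using assms by (intro borel_measurable_times L2_borel_measurable)
  have "\<bar>u x * v x\<bar> \<le> (u x)\<^sup>2 + (v x)\<^sup>2" for x
  proof -
    have "2 * \<bar>u x * v x\<bar> \<le> (u x)\<^sup>2 + (v x)\<^sup>2"
      using sum_squares_bound[of "\<bar>u x\<bar>" "\<bar>v x\<bar>"] by (simp add: abs_mult)
    then show ?thesis by linarith
  qed
  then show "AE x in lebesgue_on \<Omega>. norm (u x * v x) \<le> norm ((u x)\<^sup>2 + (v x)\<^sup>2)"
    by (intro AE_I2) simp
qed

lemma L2_add:
  assumes "u \<in> L2 \<Omega>" "v \<in> L2 \<Omega>"
  shows "(\<lambda>x. u x + v x) \<in> L2 \<Omega>"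
proof (rule L2_if_power2_le)
  show "integrable (lebesgue_on \<Omega>) (\<lambda>x. (u x)\<^sup>2 + 2 * (u x * v x) + (v x)\<^sup>2)"
    using assms integrable_L2_mult[OF assms] by (simp add: L2_integrable_power2)
qed (use assms in \<open>auto intro: borel_measurable_add L2_borel_measurable simp: power2_sum\<close>)

lemma L2_cmult:
  assumes "u \<in> L2 \<Omega>"
  shows "(\<lambda>x. c * u x) \<in> L2 \<Omega>"
  using assms by (simp add: L2_def power_mult_distrib borel_measurable_times)

lemma L2_diff:
  assumes "u \<in> L2 \<Omega>" "v \<in> L2 \<Omega>"
  shows "(\<lambda>x. u x - v x) \<in> L2 \<Omega>"
  using L2_add[OF assms(1) L2_cmult[OF assms(2), of "-1"]] by simp

lemma L2_if:
  assumes "u \<in> L2 \<Omega>" "v \<in> L2 \<Omega>" and [measurable]: "Measurable.pred (lebesgue_on \<Omega>) P"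
  shows "(\<lambda>x. if P x then u x else v x) \<in> L2 \<Omega>"
proof (rule L2_if_power2_le)
  show "integrable (lebesgue_on \<Omega>) (\<lambda>x. (u x)\<^sup>2 + (v x)\<^sup>2)"
    using assms by (simp add: L2_integrable_power2)
  have [measurable]: "u \<in> borel_measurable (lebesgue_on \<Omega>)" "v \<in> borel_measurable (lebesgue_on \<Omega>)"
    using assms by (simp_all add: L2_borel_measurable)
  show "(\<lambda>x. if P x then u x else v x) \<in> borel_measurable (lebesgue_on \<Omega>)"
    by measurable
qed auto

lemma l2_norm_nonneg: "0 \<le> l2_norm \<Omega> u"
  by (simp add: l2_norm_def)

lemma power2_l2_norm: "(l2_norm \<Omega> u)\<^sup>2 = (\<integral>x. (u x)\<^sup>2 \<partial>lebesgue_on \<Omega>)"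
  by (simp add: l2_norm_def)

lemma l2_norm_cmult: "l2_norm \<Omega> (\<lambda>x. c * u x) = \<bar>c\<bar> * l2_norm \<Omega> u"
  by (simp add: l2_norm_def power_mult_distrib real_sqrt_mult)

lemma l2_norm_minus: "l2_norm \<Omega> (\<lambda>x. - u x) = l2_norm \<Omega> u"
  by (simp add: l2_norm_def)

lemma l2_norm_diff_commute: "l2_norm \<Omega> (\<lambda>x. v x - w x) = l2_norm \<Omega> (\<lambda>x. w x - v x)"
  by (simp add: l2_norm_def power2_commute)

lemma l2_inner_cmult_right: "l2_inner \<Omega> g (\<lambda>x. c * u x) = c * l2_inner \<Omega> g u"
  by (simp add: l2_inner_def mult.left_commute)

lemma l2_inner_diff_left:
  assumes "g \<in> L2 \<Omega>" "h \<in> L2 \<Omega>" "u \<in> L2 \<Omega>"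
  shows "l2_inner \<Omega> (\<lambda>x. g x - h x) u = l2_inner \<Omega> g u - l2_inner \<Omega> h u"
  using integrable_L2_mult[OF assms(1,3)] integrable_L2_mult[OF assms(2,3)]
  by (simp add: l2_inner_def left_diff_distrib)

lemma power2_l2_norm_scaled_add:
  assumes "u \<in> L2 \<Omega>" "v \<in> L2 \<Omega>"
  shows "(l2_norm \<Omega> (\<lambda>x. t * u x + v x))\<^sup>2
           = t\<^sup>2 * (l2_norm \<Omega> u)\<^sup>2 + 2 * t * l2_inner \<Omega> u v + (l2_norm \<Omega> v)\<^sup>2"
proof -
  have "(\<lambda>x. (t * u x + v x)\<^sup>2) = (\<lambda>x. t\<^sup>2 * (u x)\<^sup>2 + (2 * t) * (u x * v x) + (v x)\<^sup>2)"
    by (auto simp: power2_sum power_mult_distrib algebra_simps)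
  then show ?thesis
    using assms integrable_L2_mult[OF assms]
    by (simp add: power2_l2_norm l2_inner_def L2_integrable_power2)
qed

lemma l2_inner_Cauchy_Schwarz:
  assumes "u \<in> L2 \<Omega>" "v \<in> L2 \<Omega>"
  shows "\<bar>l2_inner \<Omega> u v\<bar> \<le> l2_norm \<Omega> u * l2_norm \<Omega> v"
proof -
  define A B C where "A = (l2_norm \<Omega> u)\<^sup>2" and "B = (l2_norm \<Omega> v)\<^sup>2" and "C = l2_inner \<Omega> u v"
  have quadratic_nonneg: "0 \<le> t\<^sup>2 * A + 2 * t * C + B" for t
    using power2_l2_norm_scaled_add[OF assms, of t] unfolding A_def B_def C_def
    by (metis zero_le_power2)
  have "C\<^sup>2 \<le> A * B"
  proof (cases "A = 0")
    case True
    have "C = 0"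
    proof (rule ccontr)
      assume "C \<noteq> 0"
      then have "2 * (-(B + 1) / (2 * C)) * C + B = -1" by (simp add: field_simps)
      then show False using quadratic_nonneg[of "-(B + 1) / (2 * C)"] True by simp
    qed
    then show ?thesis using True by simp
  next
    case False
    then have "A > 0" by (simp add: A_def)
    have "0 \<le> (-C/A)\<^sup>2 * A + 2 * (-C/A) * C + B" by (rule quadratic_nonneg)
    also have "\<dots> = B - C\<^sup>2 / A" using \<open>A > 0\<close> by (simp add: field_simps power2_eq_square)
    finally show ?thesis using \<open>A > 0\<close> by (simp add: field_simps)
  qed
  then have "sqrt (C\<^sup>2) \<le> sqrt (A * B)" by (rule real_sqrt_le_mono)
  then show ?thesis
    by (simp add: A_def B_def C_def real_sqrt_mult l2_norm_nonneg)
qed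

lemma l2_norm_triangle:
  assumes "u \<in> L2 \<Omega>" "v \<in> L2 \<Omega>"
  shows "l2_norm \<Omega> (\<lambda>x. u x + v x) \<le> l2_norm \<Omega> u + l2_norm \<Omega> v"
proof -
  have "(l2_norm \<Omega> (\<lambda>x. u x + v x))\<^sup>2 = (l2_norm \<Omega> u)\<^sup>2 + 2 * l2_inner \<Omega> u v + (l2_norm \<Omega> v)\<^sup>2"
    using power2_l2_norm_scaled_add[OF assms, of 1] by simp
  also have "\<dots> \<le> (l2_norm \<Omega> u + l2_norm \<Omega> v)\<^sup>2"
    using l2_inner_Cauchy_Schwarz[OF assms] by (simp add: power2_sum)
  finally show ?thesis
    using l2_norm_nonneg[of \<Omega> u] l2_norm_nonneg[of \<Omega> v] by (meson add_nonneg_nonneg power2_le_imp_le)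
qed

lemma l2_norm_lipschitz_image_le:
  assumes "Lf \<ge> 0" "v \<in> L2 \<Omega>" "w \<in> L2 \<Omega>" "G v \<in> L2 \<Omega>" "G w \<in> L2 \<Omega>"
    and lip: "l2_norm \<Omega> (\<lambda>x. G v x - G w x) \<le> Lf * l2_norm \<Omega> (\<lambda>x. v x - w x)"
  shows "l2_norm \<Omega> (G v) \<le> l2_norm \<Omega> (G w) + Lf * (l2_norm \<Omega> v + l2_norm \<Omega> w)"
proof -
  have "l2_norm \<Omega> (G v) \<le> l2_norm \<Omega> (G w) + l2_norm \<Omega> (\<lambda>x. G v x - G w x)"
    using l2_norm_triangle[OF assms(5) L2_diff[OF assms(4,5)]] by simp
  also have "l2_norm \<Omega> (\<lambda>x. v x - w x) \<le> l2_norm \<Omega> v + l2_norm \<Omega> w"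
    using l2_norm_triangle[OF assms(2) L2_cmult[OF assms(3), of "-1"]] by (simp add: l2_norm_minus)
  then have "l2_norm \<Omega> (\<lambda>x. G v x - G w x) \<le> Lf * (l2_norm \<Omega> v + l2_norm \<Omega> w)"
    using lip assms(1) by (meson mult_left_mono order_trans)
  finally show ?thesis by simp
qed

section \<open>The descent lemma\<close>

lemma frechet_gradient_L2: "frechet_gradient \<Omega> f G \<Longrightarrow> u \<in> L2 \<Omega> \<Longrightarrow> G u \<in> L2 \<Omega>"
  by (simp add: frechet_gradient_def)

lemma frechet_gradient_has_real_derivative_line:
  assumes G: "frechet_gradient \<Omega> f G" and u: "u \<in> L2 \<Omega>" and d: "d \<in> L2 \<Omega>"
  shows "((\<lambda>s. f (\<lambda>x. u x + s * d x)) has_real_derivative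
            l2_inner \<Omega> (G (\<lambda>x. u x + t * d x)) d) (at t)"
proof -
  define w where "w s = (\<lambda>x. u x + s * d x)" for s
  define N where "N = l2_norm \<Omega> d"
  define D where "D = l2_inner \<Omega> (G (w t)) d"
  have "N \<ge> 0" by (simp add: N_def l2_norm_nonneg)
  have w_L2: "w s \<in> L2 \<Omega>" for s
    unfolding w_def using L2_add[OF u L2_cmult[OF d]] .
  have w_diff: "(\<lambda>x. w s x - w t x) = (\<lambda>x. (s - t) * d x)" for s
    by (auto simp: w_def algebra_simps)
  have "\<exists>\<delta>>0. \<forall>s. \<bar>s - t\<bar> < \<delta> \<longrightarrow> \<bar>f (w s) - f (w t) - D * (s - t)\<bar> \<le> e * \<bar>s - t\<bar>"
    if "e > 0" for e
  proof -
    have "e / (N + 1) > 0" using \<open>e > 0\<close> \<open>N \<ge> 0\<close> by simp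
    then obtain \<delta> where "\<delta> > 0" and \<delta>: "\<forall>v \<in> L2 \<Omega>. l2_norm \<Omega> (\<lambda>x. v x - w t x) < \<delta> \<longrightarrow>
        \<bar>f v - f (w t) - l2_inner \<Omega> (G (w t)) (\<lambda>x. v x - w t x)\<bar>
          \<le> e / (N + 1) * l2_norm \<Omega> (\<lambda>x. v x - w t x)"
      using G w_L2[of t] unfolding frechet_gradient_def by blast
    show ?thesis
    proof (intro exI[of _ "\<delta> / (N + 1)"] conjI allI impI)
      show "\<delta> / (N + 1) > 0" using \<open>\<delta> > 0\<close> \<open>N \<ge> 0\<close> by simp
      fix s assume s: "\<bar>s - t\<bar> < \<delta> / (N + 1)"
      have norm_eq: "l2_norm \<Omega> (\<lambda>x. w s x - w t x) = \<bar>s - t\<bar> * N"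
        by (simp add: w_diff l2_norm_cmult N_def)
      have inner_eq: "l2_inner \<Omega> (G (w t)) (\<lambda>x. w s x - w t x) = D * (s - t)"
        by (simp add: w_diff l2_inner_cmult_right D_def)
      have "\<bar>s - t\<bar> * N \<le> \<bar>s - t\<bar> * (N + 1)" by (simp add: mult_left_mono)
      also have "\<dots> < \<delta>" using s \<open>N \<ge> 0\<close> by (simp add: field_simps)
      finally have "\<bar>f (w s) - f (w t) - D * (s - t)\<bar> \<le> e / (N + 1) * (\<bar>s - t\<bar> * N)"
        using bspec[OF \<delta> w_L2[of s]] norm_eq inner_eq by simp
      also have "\<dots> \<le> e * \<bar>s - t\<bar>"
        using \<open>e > 0\<close> \<open>N \<ge> 0\<close> by (simp add: field_simps mult_left_mono)
      finally show "\<bar>f (w s) - f (w t) - D * (s - t)\<bar> \<le> e * \<bar>s - t\<bar>" .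
    qed
  qed
  then show ?thesis
    unfolding has_field_derivative_def has_derivative_at_alt
    by (simp add: w_def D_def bounded_linear_mult_right)
qed

lemma frechet_gradient_descent_lemma:
  assumes G: "frechet_gradient \<Omega> f G" and u: "u \<in> L2 \<Omega>" and v: "v \<in> L2 \<Omega>"
    and lip: "\<And>v w. v \<in> L2 \<Omega> \<Longrightarrow> w \<in> L2 \<Omega> \<Longrightarrow>
        l2_norm \<Omega> (\<lambda>x. G v x - G w x) \<le> Lf * l2_norm \<Omega> (\<lambda>x. v x - w x)"
  shows "f v \<le> f u + l2_inner \<Omega> (G u) (\<lambda>x. v x - u x) + Lf / 2 * (l2_norm \<Omega> (\<lambda>x. v x - u x))\<^sup>2"
proof -
  define d where "d = (\<lambda>x. v x - u x)"
  define w where "w s = (\<lambda>x. u x + s * d x)" for s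
  define N where "N = l2_norm \<Omega> d"
  define D0 where "D0 = l2_inner \<Omega> (G u) d"
  define \<psi> where "\<psi> t = f (w t) - t * D0 - Lf / 2 * t\<^sup>2 * N\<^sup>2" for t
  have d_L2: "d \<in> L2 \<Omega>" unfolding d_def using L2_diff[OF v u] .
  have w_L2: "w s \<in> L2 \<Omega>" for s
    unfolding w_def using L2_add[OF u L2_cmult[OF d_L2]] .
  have \<psi>_deriv: "(\<psi> has_real_derivative l2_inner \<Omega> (G (w t)) d - D0 - Lf * t * N\<^sup>2) (at t)" for t
  proof -
    have "((\<lambda>t. f (w t)) has_real_derivative l2_inner \<Omega> (G (w t)) d) (at t)"
      unfolding w_def by (rule frechet_gradient_has_real_derivative_line[OF G u d_L2])
    then show ?thesis
      unfolding \<psi>_def by (auto intro!: derivative_eq_intros)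
  qed
  have "\<psi> 1 \<le> \<psi> 0"
  proof (rule DERIV_nonpos_imp_decreasing_open[of 0 1 \<psi>])
    show "continuous_on {0..1} \<psi>"
      using \<psi>_deriv by (meson DERIV_isCont continuous_at_imp_continuous_on)
    fix t :: real assume "0 < t" "t < 1"
    have "l2_inner \<Omega> (G (w t)) d - D0 = l2_inner \<Omega> (\<lambda>x. G (w t) x - G u x) d"
      unfolding D0_def
      using l2_inner_diff_left[OF frechet_gradient_L2[OF G w_L2[of t]] frechet_gradient_L2[OF G u] d_L2] by simp
    also have "\<dots> \<le> l2_norm \<Omega> (\<lambda>x. G (w t) x - G u x) * N"
      using l2_inner_Cauchy_Schwarz[OF L2_diff[OF frechet_gradient_L2[OF G w_L2[of t]] frechet_gradient_L2[OF G u]] d_L2]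
      unfolding N_def by linarith
    also have "\<dots> \<le> Lf * l2_norm \<Omega> (\<lambda>x. w t x - u x) * N"
      using lip[OF w_L2 u] by (simp add: N_def l2_norm_nonneg mult_right_mono)
    also have "\<dots> = Lf * t * N\<^sup>2"
      using \<open>0 < t\<close> by (simp add: w_def l2_norm_cmult N_def power2_eq_square)
    finally show "\<exists>y. (\<psi> has_real_derivative y) (at t) \<and> y \<le> 0"
      using \<psi>_deriv[of t] by auto
  qed simp
  moreover have "w 0 = u" "w 1 = v" by (auto simp: w_def d_def)
  ultimately show ?thesis
    by (simp add: \<psi>_def d_def N_def D0_def)
qed

section \<open>The admissible set and the IHT model\<close>

lemma Uad_L2: "v \<in> Uad \<Omega> b \<Longrightarrow> v \<in> L2 \<Omega>"
  by (simp add: Uad_def)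

lemma Uad_AE_bound: "v \<in> Uad \<Omega> b \<Longrightarrow> AE x in lebesgue_on \<Omega>. ereal \<bar>v x\<bar> \<le> b"
  by (simp add: Uad_def)

lemma zero_in_Uad: "0 \<le> b \<Longrightarrow> (\<lambda>x. 0) \<in> Uad \<Omega> b"
  by (simp add: Uad_def L2_zero zero_ereal_def)

lemma Uad_if:
  assumes "v \<in> Uad \<Omega> b" "w \<in> Uad \<Omega> b" "Measurable.pred (lebesgue_on \<Omega>) P"
  shows "(\<lambda>x. if P x then v x else w x) \<in> Uad \<Omega> b"
  using L2_if[OF Uad_L2[OF assms(1)] Uad_L2[OF assms(2)] assms(3)]
    Uad_AE_bound[OF assms(1)] Uad_AE_bound[OF assms(2)]
  unfolding Uad_def by (auto elim: AE_mp)

lemma Uad_double_where_admissible: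
  assumes "v \<in> Uad \<Omega> b"
  shows "(\<lambda>x. if ereal \<bar>2 * v x\<bar> \<le> b then 2 * v x else v x) \<in> Uad \<Omega> b"
proof -
  have [measurable]: "v \<in> borel_measurable (lebesgue_on \<Omega>)"
    using assms by (simp add: Uad_L2 L2_borel_measurable)
  have "(\<lambda>x. if ereal \<bar>2 * v x\<bar> \<le> b then 2 * v x else v x) \<in> L2 \<Omega>"
    using assms by (intro L2_if L2_cmult Uad_L2) measurable
  then show ?thesis
    using Uad_AE_bound[OF assms] unfolding Uad_def by (auto elim: AE_mp)
qed

lemma power2_l2_norm_Uad_le:
  assumes "\<Omega> \<in> lmeasurable" "v \<in> Uad \<Omega> (ereal r)"
  shows "(l2_norm \<Omega> v)\<^sup>2 \<le> (\<integral>x. r\<^sup>2 \<partial>lebesgue_on \<Omega>)"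
  unfolding power2_l2_norm
proof (rule integral_mono_AE)
  show "integrable (lebesgue_on \<Omega>) (\<lambda>x. (v x)\<^sup>2)"
    using assms(2) by (simp add: Uad_L2 L2_integrable_power2)
  show "AE x in lebesgue_on \<Omega>. (v x)\<^sup>2 \<le> r\<^sup>2"
    using Uad_AE_bound[OF assms(2)]
  proof eventually_elim
    case (elim x)
    then have "\<bar>v x\<bar>\<^sup>2 \<le> \<bar>r\<bar>\<^sup>2" by (intro power_mono) auto
    then show ?case by simp
  qed
qed (use finite_measure_lebesgue_on[OF assms(1)] finite_measure.integrable_const in blast)

lemma gfun_nonneg: "0 \<le> \<alpha> \<Longrightarrow> 0 \<le> \<beta> \<Longrightarrow> 0 \<le> gfun \<alpha> \<beta> \<Omega> v"
  by (simp add: gfun_def l0_norm_def)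

definition iht_scalar_model :: "real \<Rightarrow> real \<Rightarrow> real \<Rightarrow> real \<Rightarrow> real \<Rightarrow> real \<Rightarrow> real" where
  "iht_scalar_model \<alpha> \<beta> L g a s =
     g * (s - a) + L / 2 * (s - a)\<^sup>2 + \<alpha> / 2 * s\<^sup>2 + \<beta> * (if s = 0 then 0 else 1)"

(* The comparison with 0 bounds \<beta> by the quadratic part, the one with 2 t bounds the linear term. *)
lemma iht_scalar_model_threshold:
  assumes "L + \<alpha> > 0" and "t \<noteq> 0"
    and "iht_scalar_model \<alpha> \<beta> L g a t \<le> iht_scalar_model \<alpha> \<beta> L g a 0"
    and "iht_scalar_model \<alpha> \<beta> L g a t \<le> iht_scalar_model \<alpha> \<beta> L g a (2 * t)"
  shows "\<beta> / (L + \<alpha>) \<le> t\<^sup>2"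
proof -
  define c where "c = g - L * a"
  have "(L + \<alpha>) / 2 * t\<^sup>2 + c * t + \<beta> \<le> 0"
    using assms(2,3) by (simp add: iht_scalar_model_def c_def power2_eq_square field_simps)
  moreover have "- (c * t) \<le> 3 * (L + \<alpha>) / 2 * t\<^sup>2"
    using assms(2,4) by (simp add: iht_scalar_model_def c_def power2_eq_square field_simps)
  ultimately have "\<beta> \<le> (L + \<alpha>) * t\<^sup>2" by linarith
  then show ?thesis using assms(1) by (simp add: divide_le_eq mult.commute)
qed

lemma exists_pos_lower_bound_sq:
  fixes b :: ereal and c :: real
  assumes "b > 0" "c > 0"
  shows "\<exists>\<delta>>0. \<forall>t. b < ereal \<bar>2 * t\<bar> \<or> c \<le> t\<^sup>2 \<longrightarrow> \<delta> \<le> t\<^sup>2"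
proof (cases b)
  case (real r)
  then have "r > 0" using assms by simp
  have "min ((r / 2)\<^sup>2) c \<le> t\<^sup>2" if "b < ereal \<bar>2 * t\<bar> \<or> c \<le> t\<^sup>2" for t
  proof (cases "c \<le> t\<^sup>2")
    case False
    then have "r / 2 < \<bar>t\<bar>" using that real by simp
    then have "(r / 2)\<^sup>2 \<le> \<bar>t\<bar>\<^sup>2" using \<open>r > 0\<close> by (intro power_mono) auto
    then show ?thesis by simp
  qed simp
  then show ?thesis using \<open>r > 0\<close> assms by (intro exI[of _ "min ((r / 2)\<^sup>2) c"]) auto
qed (use assms in auto)

lemma l0_norm_eq_integral:
  assumes "\<Omega> \<in> lmeasurable" "v \<in> borel_measurable (lebesgue_on \<Omega>)"
  shows "integrable (lebesgue_on \<Omega>) (\<lambda>x. if v x = 0 then 0 else 1 :: real)"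
    and "l0_norm \<Omega> v = (\<integral>x. (if v x = 0 then 0 else 1 :: real) \<partial>lebesgue_on \<Omega>)"
proof -
  interpret finite_measure "lebesgue_on \<Omega>"
    using assms(1) by (rule finite_measure_lebesgue_on)
  have [measurable]: "v \<in> borel_measurable (lebesgue_on \<Omega>)" by (fact assms(2))
  show "integrable (lebesgue_on \<Omega>) (\<lambda>x. if v x = 0 then 0 else 1 :: real)"
    by (rule integrable_const_bound[where B=1]) auto
  have "(\<lambda>x. if v x = 0 then 0 else 1 :: real) = indicator {x. v x \<noteq> 0}"
    by (auto simp: fun_eq_iff indicator_def)
  moreover have "{x. v x \<noteq> 0} \<inter> \<Omega> = {x \<in> \<Omega>. v x \<noteq> 0}" by auto
  ultimately show "l0_norm \<Omega> v = (\<integral>x. (if v x = 0 then 0 else 1 :: real) \<partial>lebesgue_on \<Omega>)"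
    by (simp add: l0_norm_def)
qed

lemma iht_model_eq_integral:
  assumes "\<Omega> \<in> lmeasurable" "uk \<in> L2 \<Omega>" "G uk \<in> L2 \<Omega>" "v \<in> L2 \<Omega>"
  shows "integrable (lebesgue_on \<Omega>) (\<lambda>x. iht_scalar_model \<alpha> \<beta> L (G uk x) (uk x) (v x))"
    and "iht_model \<alpha> \<beta> \<Omega> f G L uk v
           = f uk + (\<integral>x. iht_scalar_model \<alpha> \<beta> L (G uk x) (uk x) (v x) \<partial>lebesgue_on \<Omega>)"
proof -
  have d: "(\<lambda>x. v x - uk x) \<in> L2 \<Omega>" using L2_diff[OF assms(4,2)] .
  note integrable =
    integrable_L2_mult[OF assms(3) d] L2_integrable_power2[OF d] L2_integrable_power2[OF assms(4)]
    l0_norm_eq_integral[OF assms(1) L2_borel_measurable[OF assms(4)]]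
  show "integrable (lebesgue_on \<Omega>) (\<lambda>x. iht_scalar_model \<alpha> \<beta> L (G uk x) (uk x) (v x))"
    unfolding iht_scalar_model_def using integrable by simp
  show "iht_model \<alpha> \<beta> \<Omega> f G L uk v
           = f uk + (\<integral>x. iht_scalar_model \<alpha> \<beta> L (G uk x) (uk x) (v x) \<partial>lebesgue_on \<Omega>)"
    unfolding iht_scalar_model_def using integrable
    by (simp add: iht_model_def gfun_def l2_inner_def power2_l2_norm)
qed

section \<open>Supports and symmetric differences\<close>

lemma sym_diff_liminf_subset:
  "sym_diff (T i) (\<Union>N. \<Inter>j\<in>{N..}. T j) \<subseteq> (\<Union>j. sym_diff (T (j + i)) (T (Suc (j + i))))"
proof
  fix x assume x: "x \<in> sym_diff (T i) (\<Union>N. \<Inter>j\<in>{N..}. T j)"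
  show "x \<in> (\<Union>j. sym_diff (T (j + i)) (T (Suc (j + i))))"
  proof (rule ccontr)
    assume "x \<notin> (\<Union>j. sym_diff (T (j + i)) (T (Suc (j + i))))"
    then have "x \<in> T (j + i) \<longleftrightarrow> x \<in> T i" for j
      by (induction j) auto
    then have stable: "x \<in> T j \<longleftrightarrow> x \<in> T i" if "j \<ge> i" for j
      using that le_add_diff_inverse2 by metis
    have "x \<in> (\<Union>N. \<Inter>j\<in>{N..}. T j) \<longleftrightarrow> x \<in> T i"
    proof
      assume "x \<in> (\<Union>N. \<Inter>j\<in>{N..}. T j)"
      then obtain N where "\<forall>j\<ge>N. x \<in> T j" by auto
      then have "x \<in> T (max N i)" by simp
      then show "x \<in> T i" using stable[of "max N i"] by simp
    next
      assume "x \<in> T i"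
      then show "x \<in> (\<Union>N. \<Inter>j\<in>{N..}. T j)" using stable by blast
    qed
    then show False using x by blast
  qed
qed

lemma (in finite_measure) measure_sym_diff_liminf_tendsto_zero:
  assumes T: "range T \<subseteq> sets M"
    and summable: "summable (\<lambda>k. measure M (sym_diff (T k) (T (Suc k))))"
  shows "(\<lambda>k. measure M (sym_diff (T k) (\<Union>N. \<Inter>j\<in>{N..}. T j))) \<longlonglongrightarrow> 0"
proof (rule tendsto_sandwich[OF _ _ tendsto_const suminf_exist_split2[OF summable]])
  have "measure M (sym_diff (T i) (\<Union>N. \<Inter>j\<in>{N..}. T j))
          \<le> measure M (\<Union>j. sym_diff (T (j + i)) (T (Suc (j + i))))" for i
    using sym_diff_liminf_subset[of T i] T by (intro finite_measure_mono) auto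
  also have "\<dots> i \<le> (\<Sum>j. measure M (sym_diff (T (j + i)) (T (Suc (j + i)))))" for i
    using T summable_ignore_initial_segment[OF summable, of i]
    by (intro finite_measure_subadditive_countably) auto
  finally show "\<forall>\<^sub>F i in sequentially. measure M (sym_diff (T i) (\<Union>N. \<Inter>j\<in>{N..}. T j))
          \<le> (\<Sum>j. measure M (sym_diff (T (j + i)) (T (Suc (j + i)))))"
    by simp
qed simp

lemma l1_norm_indicator_diff:
  assumes S: "S \<in> sets (lebesgue_on \<Omega>)" and A: "A \<in> sets (lebesgue_on \<Omega>)"
    and p: "\<And>x. x \<in> \<Omega> \<Longrightarrow> p x = indicator S x" and q: "\<And>x. x \<in> \<Omega> \<Longrightarrow> q x = indicator A x"
  shows "l1_norm \<Omega> (\<lambda>x. p x - q x) = measure (lebesgue_on \<Omega>) (sym_diff S A)"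
proof -
  have "l1_norm \<Omega> (\<lambda>x. p x - q x) = (\<integral>x. indicator (sym_diff S A) x \<partial>lebesgue_on \<Omega>)"
    unfolding l1_norm_def
    by (rule Bochner_Integration.integral_cong) (auto simp: p q indicator_def)
  also have "\<dots> = measure (lebesgue_on \<Omega>) (sym_diff S A \<inter> \<Omega>)" by simp
  also have "sym_diff S A \<inter> \<Omega> = sym_diff S A"
    using sets.sets_into_space[OF S] sets.sets_into_space[OF A] by auto
  finally show ?thesis .
qed

lemma support_in_sets:
  fixes u :: "'a::euclidean_space \<Rightarrow> real"
  assumes [measurable]: "u \<in> borel_measurable (lebesgue_on \<Omega>)"
  shows "{x \<in> \<Omega>. u x \<noteq> 0} \<in> sets (lebesgue_on \<Omega>)"
proof -
  have "{x \<in> space (lebesgue_on \<Omega>). u x \<noteq> 0} \<in> sets (lebesgue_on \<Omega>)" by measurable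
  then show ?thesis by simp
qed

lemma chi_eq_indicator_support: "x \<in> \<Omega> \<Longrightarrow> chi u x = indicator {x \<in> \<Omega>. u x \<noteq> 0} x"
  by (simp add: chi_def indicator_def)

lemma measure_support_sym_diff_le:
  assumes \<Omega>: "\<Omega> \<in> lmeasurable" and v: "v \<in> L2 \<Omega>" and w: "w \<in> L2 \<Omega>" and "\<delta> > 0"
    and gap_v: "AE x in lebesgue_on \<Omega>. v x \<noteq> 0 \<longrightarrow> \<delta> \<le> (v x)\<^sup>2"
    and gap_w: "AE x in lebesgue_on \<Omega>. w x \<noteq> 0 \<longrightarrow> \<delta> \<le> (w x)\<^sup>2"
  shows "measure (lebesgue_on \<Omega>) (sym_diff {x \<in> \<Omega>. v x \<noteq> 0} {x \<in> \<Omega>. w x \<noteq> 0})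
           \<le> (l2_norm \<Omega> (\<lambda>x. v x - w x))\<^sup>2 / \<delta>"
proof -
  interpret finite_measure "lebesgue_on \<Omega>"
    using \<Omega> by (rule finite_measure_lebesgue_on)
  define S where "S = sym_diff {x \<in> \<Omega>. v x \<noteq> 0} {x \<in> \<Omega>. w x \<noteq> 0}"
  have S: "S \<in> sets (lebesgue_on \<Omega>)"
    unfolding S_def using v w by (intro sets.Un sets.Diff support_in_sets L2_borel_measurable)
  have "measure (lebesgue_on \<Omega>) S = (\<integral>x. indicator S x \<partial>lebesgue_on \<Omega>)"
    using sets.sets_into_space[OF S] by (simp add: Int_absorb2)
  also have "\<dots> \<le> (\<integral>x. (v x - w x)\<^sup>2 / \<delta> \<partial>lebesgue_on \<Omega>)"
  proof (rule integral_mono_AE)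
    show "integrable (lebesgue_on \<Omega>) (indicator S :: _ \<Rightarrow> real)"
      using S by (intro integrable_real_indicator) (auto simp: less_top[symmetric] emeasure_finite)
    show "integrable (lebesgue_on \<Omega>) (\<lambda>x. (v x - w x)\<^sup>2 / \<delta>)"
      using L2_integrable_power2[OF L2_diff[OF v w]] by simp
    show "AE x in lebesgue_on \<Omega>. indicator S x \<le> (v x - w x)\<^sup>2 / \<delta>"
      using gap_v gap_w by eventually_elim (use \<open>\<delta> > 0\<close> in \<open>auto simp: S_def indicator_def\<close>)
  qed
  also have "\<dots> = (l2_norm \<Omega> (\<lambda>x. v x - w x))\<^sup>2 / \<delta>"
    by (simp add: power2_l2_norm)
  finally show ?thesis unfolding S_def .
qed

section \<open>The IHT iteration\<close>

locale iht_iteration =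
  fixes \<Omega> :: "'a::euclidean_space set"
    and \<alpha> \<beta> L Lf :: real and b :: ereal
    and f :: "('a \<Rightarrow> real) \<Rightarrow> real"
    and gradf :: "('a \<Rightarrow> real) \<Rightarrow> ('a \<Rightarrow> real)"
    and u :: "nat \<Rightarrow> 'a \<Rightarrow> real"
  assumes \<Omega>: "\<Omega> \<in> lmeasurable"
    and \<alpha>: "\<alpha> \<ge> 0" and \<beta>: "\<beta> > 0" and b: "b > 0"
    and f_below: "\<exists>c. \<forall>v \<in> L2 \<Omega>. c \<le> f v"
    and f_grad: "frechet_gradient \<Omega> f gradf"
    and Lf: "Lf \<ge> 0"
    and grad_lip: "\<And>v w. v \<in> L2 \<Omega> \<Longrightarrow> w \<in> L2 \<Omega> \<Longrightarrow>
        l2_norm \<Omega> (\<lambda>x. gradf v x - gradf w x) \<le> Lf * l2_norm \<Omega> (\<lambda>x. v x - w x)"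
    and L: "L > Lf"
    and u0: "u 0 \<in> Uad \<Omega> b"
    and iht: "\<And>k. u (Suc k) \<in> Uad \<Omega> b \<and>
        (\<forall>v \<in> Uad \<Omega> b. iht_model \<alpha> \<beta> \<Omega> f gradf L (u k) (u (Suc k))
                          \<le> iht_model \<alpha> \<beta> \<Omega> f gradf L (u k) v)"
begin

definition objective :: "('a \<Rightarrow> real) \<Rightarrow> real" where
  "objective v = f v + gfun \<alpha> \<beta> \<Omega> v"

lemma u_Uad: "u k \<in> Uad \<Omega> b"
  by (cases k) (use u0 iht in auto)

lemma u_L2: "u k \<in> L2 \<Omega>"
  using u_Uad by (rule Uad_L2)

lemma gradf_u_L2: "gradf (u k) \<in> L2 \<Omega>"
  using f_grad u_L2 by (rule frechet_gradient_L2)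

lemma iht_model_le_self: "iht_model \<alpha> \<beta> \<Omega> f gradf L (u k) (u (Suc k)) \<le> objective (u k)"
proof -
  have "iht_model \<alpha> \<beta> \<Omega> f gradf L (u k) (u (Suc k)) \<le> iht_model \<alpha> \<beta> \<Omega> f gradf L (u k) (u k)"
    using iht[of k] u_Uad[of k] by blast
  also have "\<dots> = objective (u k)"
    by (simp add: iht_model_def l2_inner_def l2_norm_def objective_def)
  finally show ?thesis .
qed

lemma objective_decrease:
  "objective (u (Suc k)) \<le> objective (u k) - (L - Lf) / 2 * (l2_norm \<Omega> (\<lambda>x. u (Suc k) x - u k x))\<^sup>2"
proof -
  define I where "I = l2_inner \<Omega> (gradf (u k)) (\<lambda>x. u (Suc k) x - u k x)"
  define N where "N = (l2_norm \<Omega> (\<lambda>x. u (Suc k) x - u k x))\<^sup>2"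
  have "f (u (Suc k)) \<le> f (u k) + I + Lf / 2 * N"
    unfolding I_def N_def by (rule frechet_gradient_descent_lemma[OF f_grad u_L2 u_L2 grad_lip])
  moreover have "f (u k) + I + L / 2 * N + gfun \<alpha> \<beta> \<Omega> (u (Suc k)) \<le> objective (u k)"
    using iht_model_le_self[of k] by (simp add: iht_model_def I_def N_def)
  moreover have "(L - Lf) / 2 * N = L / 2 * N - Lf / 2 * N" by (simp add: field_simps)
  ultimately show ?thesis unfolding objective_def N_def[symmetric] by linarith
qed

lemma decseq_objective: "decseq (\<lambda>k. objective (u k))"
proof (rule decseq_SucI)
  fix k
  have "0 \<le> (L - Lf) / 2 * (l2_norm \<Omega> (\<lambda>x. u (Suc k) x - u k x))\<^sup>2" using L by simp
  then show "objective (u (Suc k)) \<le> objective (u k)" using objective_decrease[of k] by linarith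
qed

lemma objective_bounded_below: "\<exists>c. \<forall>k. c \<le> objective (u k)"
proof -
  obtain c where "\<forall>v \<in> L2 \<Omega>. c \<le> f v" using f_below by blast
  then have "c \<le> objective (u k)" for k
    using u_L2[of k] gfun_nonneg[OF \<alpha> less_imp_le[OF \<beta>], of \<Omega> "u k"] by (force simp: objective_def)
  then show ?thesis by blast
qed

lemma convergent_objective: "convergent (\<lambda>k. objective (u k))"
proof -
  obtain c where "\<forall>k. c \<le> objective (u k)" using objective_bounded_below by blast
  then obtain l where "(\<lambda>k. objective (u k)) \<longlonglongrightarrow> l"
    using decseq_convergent[OF decseq_objective] by blast
  then show ?thesis by (auto simp: convergent_def)
qed

lemma summable_power2_step: "summable (\<lambda>k. (l2_norm \<Omega> (\<lambda>x. u (Suc k) x - u k x))\<^sup>2)"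
proof (rule summable_comparison_test)
  obtain l where "(\<lambda>k. objective (u k)) \<longlonglongrightarrow> l"
    using convergent_objective by (auto simp: convergent_def)
  then show "summable (\<lambda>k. 2 / (L - Lf) * (objective (u k) - objective (u (Suc k))))"
    by (intro summable_mult telescope_summable')
  have "(l2_norm \<Omega> (\<lambda>x. u (Suc k) x - u k x))\<^sup>2
          \<le> 2 / (L - Lf) * (objective (u k) - objective (u (Suc k)))" for k
  proof -
    have "(L - Lf) / 2 * (l2_norm \<Omega> (\<lambda>x. u (Suc k) x - u k x))\<^sup>2 \<le> objective (u k) - objective (u (Suc k))"
      using objective_decrease[of k] by linarith
    then show ?thesis using L by (simp add: field_simps)
  qed
  then show "\<exists>N. \<forall>k\<ge>N. norm ((l2_norm \<Omega> (\<lambda>x. u (Suc k) x - u k x))\<^sup>2)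
          \<le> 2 / (L - Lf) * (objective (u k) - objective (u (Suc k)))"
    by simp
qed

lemma step_tendsto_zero: "(\<lambda>k. l2_norm \<Omega> (\<lambda>x. u (Suc k) x - u k x)) \<longlonglongrightarrow> 0"
proof -
  have "(\<lambda>k. sqrt ((l2_norm \<Omega> (\<lambda>x. u (Suc k) x - u k x))\<^sup>2)) \<longlonglongrightarrow> sqrt 0"
    using summable_LIMSEQ_zero[OF summable_power2_step] by (rule tendsto_real_sqrt)
  then show ?thesis by (simp add: l2_norm_nonneg)
qed

lemma iterate_pointwise_le:
  assumes w: "w \<in> Uad \<Omega> b"
  shows "AE x in lebesgue_on \<Omega>. iht_scalar_model \<alpha> \<beta> L (gradf (u k) x) (u k x) (u (Suc k) x)
                               \<le> iht_scalar_model \<alpha> \<beta> L (gradf (u k) x) (u k x) (w x)"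
proof -
  define q where "q x s = iht_scalar_model \<alpha> \<beta> L (gradf (u k) x) (u k x) s" for x s
  define v where "v x = (if q x (w x) < q x (u (Suc k) x) then w x else u (Suc k) x)" for x
  have [measurable]: "u k \<in> borel_measurable (lebesgue_on \<Omega>)" "u (Suc k) \<in> borel_measurable (lebesgue_on \<Omega>)"
    "gradf (u k) \<in> borel_measurable (lebesgue_on \<Omega>)" "w \<in> borel_measurable (lebesgue_on \<Omega>)"
    using u_L2 gradf_u_L2 Uad_L2[OF w] by (simp_all add: L2_borel_measurable)
  have "Measurable.pred (lebesgue_on \<Omega>) (\<lambda>x. q x (w x) < q x (u (Suc k) x))"
    unfolding q_def iht_scalar_model_def by measurable
  then have v: "v \<in> Uad \<Omega> b"
    unfolding v_def by (rule Uad_if[OF w u_Uad])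
  note integrable = iht_model_eq_integral(1)[where G=gradf and \<alpha>=\<alpha> and \<beta>=\<beta> and L=L,
    OF \<Omega> u_L2[of k] gradf_u_L2[of k], folded q_def]
  note model_eq = iht_model_eq_integral(2)[where G=gradf and \<alpha>=\<alpha> and \<beta>=\<beta> and L=L and f=f,
    OF \<Omega> u_L2[of k] gradf_u_L2[of k], folded q_def]
  have "(\<integral>x. q x (v x) \<partial>lebesgue_on \<Omega>) = (\<integral>x. q x (u (Suc k) x) \<partial>lebesgue_on \<Omega>)"
  proof (rule antisym)
    show "(\<integral>x. q x (v x) \<partial>lebesgue_on \<Omega>) \<le> (\<integral>x. q x (u (Suc k) x) \<partial>lebesgue_on \<Omega>)"
      using integrable[OF Uad_L2[OF v]] integrable[OF u_L2]
      by (intro integral_mono) (auto simp: v_def)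
    have "iht_model \<alpha> \<beta> \<Omega> f gradf L (u k) (u (Suc k)) \<le> iht_model \<alpha> \<beta> \<Omega> f gradf L (u k) v"
      using iht[of k] v by blast
    then show "(\<integral>x. q x (u (Suc k) x) \<partial>lebesgue_on \<Omega>) \<le> (\<integral>x. q x (v x) \<partial>lebesgue_on \<Omega>)"
      by (simp add: model_eq[OF Uad_L2[OF v]] model_eq[OF u_L2])
  qed
  then have "AE x in lebesgue_on \<Omega>. q x (v x) = q x (u (Suc k) x)"
    using integrable[OF Uad_L2[OF v]] integrable[OF u_L2]
    by (intro integral_ineq_eq_0_then_AE) (auto simp: v_def)
  then have "AE x in lebesgue_on \<Omega>. q x (u (Suc k) x) \<le> q x (w x)"
    by eventually_elim (auto simp: v_def split: if_splits)
  then show ?thesis by (simp add: q_def)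
qed

lemma support_gap: "\<exists>\<delta>>0. \<forall>k. AE x in lebesgue_on \<Omega>. u (Suc k) x \<noteq> 0 \<longrightarrow> \<delta> \<le> (u (Suc k) x)\<^sup>2"
proof -
  have "L + \<alpha> > 0" using L Lf \<alpha> by simp
  then obtain \<delta> where "\<delta> > 0" and \<delta>: "\<And>t. b < ereal \<bar>2 * t\<bar> \<or> \<beta> / (L + \<alpha>) \<le> t\<^sup>2 \<Longrightarrow> \<delta> \<le> t\<^sup>2"
    using exists_pos_lower_bound_sq[OF b, of "\<beta> / (L + \<alpha>)"] \<beta> by auto
  have "AE x in lebesgue_on \<Omega>. u (Suc k) x \<noteq> 0 \<longrightarrow> \<delta> \<le> (u (Suc k) x)\<^sup>2" for k
    using iterate_pointwise_le[OF zero_in_Uad[OF less_imp_le[OF b]], of k]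
      iterate_pointwise_le[OF Uad_double_where_admissible[OF u_Uad[of "Suc k"]], of k]
  proof eventually_elim
    case (elim x)
    show ?case
    proof
      assume "u (Suc k) x \<noteq> 0"
      show "\<delta> \<le> (u (Suc k) x)\<^sup>2"
      \<comment> \<open>if doubling leaves the box, then already |u (Suc k) x| > b / 2\<close>
      proof (cases "ereal \<bar>2 * u (Suc k) x\<bar> \<le> b")
        case True
        then have "\<beta> / (L + \<alpha>) \<le> (u (Suc k) x)\<^sup>2"
          using elim \<open>u (Suc k) x \<noteq> 0\<close> by (intro iht_scalar_model_threshold[OF \<open>L + \<alpha> > 0\<close>]) auto
        then show ?thesis by (rule \<delta>[OF disjI2])
      qed (use \<delta> in \<open>auto simp: not_le\<close>)
    qed
  qed
  then show ?thesis using \<open>\<delta> > 0\<close> by blast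
qed

lemma summable_measure_support_sym_diff:
  "summable (\<lambda>k. measure (lebesgue_on \<Omega>)
                   (sym_diff {x \<in> \<Omega>. u (Suc k) x \<noteq> 0} {x \<in> \<Omega>. u (Suc (Suc k)) x \<noteq> 0}))"
proof -
  obtain \<delta> where "\<delta> > 0" and gap: "\<And>k. AE x in lebesgue_on \<Omega>. u (Suc k) x \<noteq> 0 \<longrightarrow> \<delta> \<le> (u (Suc k) x)\<^sup>2"
    using support_gap by blast
  have "summable (\<lambda>k. (l2_norm \<Omega> (\<lambda>x. u (Suc (Suc k)) x - u (Suc k) x))\<^sup>2)"
    using summable_ignore_initial_segment[OF summable_power2_step, of 1] by simp
  moreover have "l2_norm \<Omega> (\<lambda>x. u (Suc k) x - u (Suc (Suc k)) x) = l2_norm \<Omega> (\<lambda>x. u (Suc (Suc k)) x - u (Suc k) x)"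
    for k by (rule l2_norm_diff_commute)
  ultimately have "summable (\<lambda>k. (l2_norm \<Omega> (\<lambda>x. u (Suc k) x - u (Suc (Suc k)) x))\<^sup>2 / \<delta>)"
    by (intro summable_divide) simp
  then show ?thesis
  proof (rule summable_comparison_test'[where N=0])
    fix k
    show "norm (measure (lebesgue_on \<Omega>)
                 (sym_diff {x \<in> \<Omega>. u (Suc k) x \<noteq> 0} {x \<in> \<Omega>. u (Suc (Suc k)) x \<noteq> 0}))
          \<le> (l2_norm \<Omega> (\<lambda>x. u (Suc k) x - u (Suc (Suc k)) x))\<^sup>2 / \<delta>"
      using measure_support_sym_diff_le[OF \<Omega> u_L2 u_L2 \<open>\<delta> > 0\<close> gap[of k] gap[of "Suc k"]] by simp
  qed
qed

lemma summable_l1_norm_chi_diff: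
  "summable (\<lambda>k. l1_norm \<Omega> (\<lambda>x. chi (u (Suc k)) x - chi (u (Suc (Suc k))) x))"
proof -
  have "l1_norm \<Omega> (\<lambda>x. chi (u (Suc k)) x - chi (u (Suc (Suc k))) x)
          = measure (lebesgue_on \<Omega>) (sym_diff {x \<in> \<Omega>. u (Suc k) x \<noteq> 0} {x \<in> \<Omega>. u (Suc (Suc k)) x \<noteq> 0})"
    for k
    by (rule l1_norm_indicator_diff)
      (simp_all add: support_in_sets L2_borel_measurable u_L2 chi_eq_indicator_support)
  then show ?thesis using summable_measure_support_sym_diff by simp
qed

lemma chi_tendsto_indicator:
  "\<exists>A \<in> sets (lebesgue_on \<Omega>). (\<lambda>k. l1_norm \<Omega> (\<lambda>x. chi (u k) x - indicator A x)) \<longlonglongrightarrow> 0"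
proof -
  define T where "T k = {x \<in> \<Omega>. u (Suc k) x \<noteq> 0}" for k
  define A where "A = (\<Union>N. \<Inter>j\<in>{N..}. T j)"
  interpret finite_measure "lebesgue_on \<Omega>"
    using \<Omega> by (rule finite_measure_lebesgue_on)
  have T: "T k \<in> sets (lebesgue_on \<Omega>)" for k
    unfolding T_def using u_L2 by (intro support_in_sets L2_borel_measurable)
  then have A: "A \<in> sets (lebesgue_on \<Omega>)"
    unfolding A_def by (intro sets.countable_UN sets.countable_INT) auto
  have l1_eq: "l1_norm \<Omega> (\<lambda>x. chi (u (Suc k)) x - indicator A x) = measure (lebesgue_on \<Omega>) (sym_diff (T k) A)" for k
    by (rule l1_norm_indicator_diff[OF T A]) (simp_all add: T_def chi_eq_indicator_support)
  have "(\<lambda>k. measure (lebesgue_on \<Omega>) (sym_diff (T k) A)) \<longlonglongrightarrow> 0"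
    unfolding A_def using T summable_measure_support_sym_diff[folded T_def]
    by (intro measure_sym_diff_liminf_tendsto_zero) auto
  then have "(\<lambda>k. l1_norm \<Omega> (\<lambda>x. chi (u (Suc k)) x - indicator A x)) \<longlonglongrightarrow> 0"
    by (simp add: l1_eq)
  then have "(\<lambda>k. l1_norm \<Omega> (\<lambda>x. chi (u k) x - indicator A x)) \<longlonglongrightarrow> 0"
    by (rule LIMSEQ_imp_Suc)
  then show ?thesis using A by blast
qed

lemma bounded_iterates:
  assumes "\<alpha> > 0 \<or> b < \<infinity>"
  shows "\<exists>C. \<forall>k. l2_norm \<Omega> (u k) \<le> C"
proof -
  have "\<exists>C. \<forall>k. (l2_norm \<Omega> (u k))\<^sup>2 \<le> C"
  proof (cases "\<alpha> > 0")
    case True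
    obtain c where c: "\<forall>v \<in> L2 \<Omega>. c \<le> f v" using f_below by blast
    have "\<alpha> / 2 * (l2_norm \<Omega> (u k))\<^sup>2 \<le> objective (u 0) - c" for k
    proof -
      have "\<alpha> / 2 * (l2_norm \<Omega> (u k))\<^sup>2 \<le> gfun \<alpha> \<beta> \<Omega> (u k)"
        using \<beta> by (simp add: gfun_def l0_norm_def)
      also have "\<dots> \<le> objective (u k) - c" using c u_L2 by (auto simp: objective_def)
      also have "\<dots> \<le> objective (u 0) - c" using decseq_objective by (simp add: decseq_def)
      finally show ?thesis .
    qed
    then have "(l2_norm \<Omega> (u k))\<^sup>2 \<le> 2 * (objective (u 0) - c) / \<alpha>" for k
      using True by (simp add: field_simps)
    then show ?thesis by blast
  next
    case False
    then obtain r where "b = ereal r" using assms b by (cases b) auto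
    then show ?thesis using power2_l2_norm_Uad_le[OF \<Omega>] u_Uad by blast
  qed
  then obtain C where "(l2_norm \<Omega> (u k))\<^sup>2 \<le> C" for k by blast
  then have "l2_norm \<Omega> (u k) \<le> sqrt C" for k
    using real_sqrt_le_mono[of "(l2_norm \<Omega> (u k))\<^sup>2" C] by (simp add: l2_norm_nonneg)
  then show ?thesis by blast
qed

lemma bounded_gradients:
  assumes "\<forall>k. l2_norm \<Omega> (u k) \<le> C"
  shows "\<exists>C. \<forall>k. l2_norm \<Omega> (gradf (u k)) \<le> C"
proof -
  have "l2_norm \<Omega> (gradf (u k)) \<le> l2_norm \<Omega> (gradf (u 0)) + Lf * (C + C)" for k
  proof -
    have "l2_norm \<Omega> (gradf (u k)) \<le> l2_norm \<Omega> (gradf (u 0)) + Lf * (l2_norm \<Omega> (u k) + l2_norm \<Omega> (u 0))"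
      by (rule l2_norm_lipschitz_image_le[OF Lf u_L2 u_L2 gradf_u_L2 gradf_u_L2 grad_lip[OF u_L2[of k] u_L2[of 0]]])
    also have "\<dots> \<le> l2_norm \<Omega> (gradf (u 0)) + Lf * (C + C)"
      using mult_left_mono[OF add_mono[OF assms[rule_format, of k] assms[rule_format, of 0]] Lf] by simp
    finally show ?thesis .
  qed
  then show ?thesis by blast
qed

end

theorem mainTheorem8:
  fixes \<Omega> :: "'a::euclidean_space set"
    and \<alpha> \<beta> L Lf :: real and b :: ereal
    and f :: "('a \<Rightarrow> real) \<Rightarrow> real"
    and gradf :: "('a \<Rightarrow> real) \<Rightarrow> ('a \<Rightarrow> real)"
    and u :: "nat \<Rightarrow> 'a \<Rightarrow> real"
  assumes \<Omega>_open: "open \<Omega>" and \<Omega>_bounded: "bounded \<Omega>"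
    and \<alpha>: "\<alpha> \<ge> 0" and \<beta>: "\<beta> > 0" and b: "b > 0"
    and f_ae: "\<And>v w. v \<in> L2 \<Omega> \<Longrightarrow> w \<in> L2 \<Omega> \<Longrightarrow>
                 (AE x in lebesgue_on \<Omega>. v x = w x) \<Longrightarrow> f v = f w"
    and f_wlsc: "weakly_lsc \<Omega> f"
    and f_below: "\<exists>c. \<forall>v \<in> L2 \<Omega>. c \<le> f v"
    and f_grad: "frechet_gradient \<Omega> f gradf"
    and Lf: "Lf \<ge> 0"
    and grad_lip: "\<And>v w. v \<in> L2 \<Omega> \<Longrightarrow> w \<in> L2 \<Omega> \<Longrightarrow>
        l2_norm \<Omega> (\<lambda>x. gradf v x - gradf w x) \<le> Lf * l2_norm \<Omega> (\<lambda>x. v x - w x)"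
    and L: "L > Lf"
    and u0: "u 0 \<in> Uad \<Omega> b"
    and iht: "\<And>k. u (Suc k) \<in> Uad \<Omega> b \<and>
        (\<forall>v \<in> Uad \<Omega> b. iht_model \<alpha> \<beta> \<Omega> f gradf L (u k) (u (Suc k))
                          \<le> iht_model \<alpha> \<beta> \<Omega> f gradf L (u k) v)"
  shows "((\<alpha> > 0 \<or> b < \<infinity>) \<longrightarrow>
            (\<exists>C. \<forall>k. l2_norm \<Omega> (u k) \<le> C) \<and> (\<exists>C. \<forall>k. l2_norm \<Omega> (gradf (u k)) \<le> C))
       \<and> decseq (\<lambda>k. f (u k) + gfun \<alpha> \<beta> \<Omega> (u k))
       \<and> convergent (\<lambda>k. f (u k) + gfun \<alpha> \<beta> \<Omega> (u k))
       \<and> (\<lambda>k. l2_norm \<Omega> (\<lambda>x. u (Suc k) x - u k x)) \<longlonglongrightarrow> 0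
       \<and> summable (\<lambda>k. l1_norm \<Omega> (\<lambda>x. chi (u (Suc k)) x - chi (u (Suc (Suc k))) x))
       \<and> (\<exists>A \<in> sets (lebesgue_on \<Omega>).
            (\<lambda>k. l1_norm \<Omega> (\<lambda>x. chi (u k) x - indicator A x)) \<longlonglongrightarrow> 0)"
proof -
  interpret iht_iteration \<Omega> \<alpha> \<beta> L Lf b f gradf u
    by (rule iht_iteration.intro[OF lmeasurable_open[OF \<Omega>_bounded \<Omega>_open]
          \<alpha> \<beta> b f_below f_grad Lf grad_lip L u0 iht])
  have "(\<alpha> > 0 \<or> b < \<infinity>) \<longrightarrow>
          (\<exists>C. \<forall>k. l2_norm \<Omega> (u k) \<le> C) \<and> (\<exists>C. \<forall>k. l2_norm \<Omega> (gradf (u k)) \<le> C)"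
    using bounded_iterates bounded_gradients by blast
  moreover have "(\<lambda>k. f (u k) + gfun \<alpha> \<beta> \<Omega> (u k)) = (\<lambda>k. objective (u k))"
    by (simp add: objective_def)
  ultimately show ?thesis
    using decseq_objective convergent_objective step_tendsto_zero
      summable_l1_norm_chi_diff chi_tendsto_indicator
    by simp
qed

end
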